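(* Fix a spatial point and let $W(x,y,t)$ be any given potential. Consider the source ODE $\frac{d\mathbf{u}}{dt}=\mathbf{s}(\mathbf{u})$ for the Ten-Moment equations. If $\mathbf{u}(t)\in\mathbb{U}_{\mathrm{ad}}$ at some time $t$, then $\mathbf{u}(t+\tau)\in\mathbb{U}_{\mathrm{ad}}$ for every $\tau\in\mathbb{R}$ (i.e. the exact solution of the source ODE is positivity preserving both forward and backward in time, without any restriction on $\tau$).
   Context: The two-dimensional Ten-Moment equations use the conservative variable $\mathbf{u}=(\rho,\rho v_1,\rho v_2,E_{11},E_{12},E_{22})^\top$, where $\rho$ is the density, $(v_1,v_2)$ the velocity, and $E_{11},E_{12},E_{22}$ the components of the symmetric energy tensor. The symmetric pressure tensor $\mathbf{p}$ is defined by $\mathbf{E}=\frac12(\mathbf{p}+\rho\mathbf{v}\otimes\mathbf{v})$, i.e. $p_{11}=2E_{11}-\rho v_1^2$, $p_{12}=2E_{12}-\rho v_1v_2$, $p_{22}=2E_{22}-\rho v_2^2$. The admissible set is $\mathbb{U}_{\mathrm{ad}}=\{\mathbf{u}\in\mathbb{R}^6:\rho(\mathbf{u})>0\text{ and }\mathbf{x}^\top\mathbf{p}(\mathbf{u})\mathbf{x}>0\ \forall\mathbf{x}\in\mathbb{R}^2\setminus\{0\}\}$. The source term arising from the body-force potential $W(x,y,t)$ is $\mathbf{s}(\mathbf{u})=\big(0,\,-\tfrac12\rho\partial_xW,\,-\tfrac12\rho\partial_yW,\,-\tfrac12\rho v_1\partial_xW,\,-\tfrac14\rho v_2\partial_xW-\tfrac14\rho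 v_1\partial_yW,\,-\tfrac12\rho v_2\partial_yW\big)^\top$. At a fixed spatial point, $\partial_xW,\partial_yW$ are given functions of $t$ only (assumed regular enough, e.g. locally integrable in $t$, for the linear ODE to be solvable). *)

theory Defs
  imports "HOL-Analysis.Analysis"
begin

text \<open>Conservative variables u = (rho, m1, m2, E11, E12, E22) with m_i = rho v_i.
  Velocity v_i = m_i / rho; pressure tensor p = 2E - rho v (x) v.\<close>

definition vel :: "real \<Rightarrow> real \<Rightarrow> real" where
  "vel rho m = m / rho"

definition p11 :: "real \<Rightarrow> real \<Rightarrow> real \<Rightarrow> real \<Rightarrow> real \<Rightarrow> real \<Rightarrow> real" where
  "p11 rho m1 m2 E11 E12 E22 = 2 * E11 - rho * (vel rho m1)^2"

definition p12 :: "real \<Rightarrow> real \<Rightarrow> real \<Rightarrow> real \<Rightarrow> real \<Rightarrow> real \<Rightarrow> real" where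
  "p12 rho m1 m2 E11 E12 E22 = 2 * E12 - rho * vel rho m1 * vel rho m2"

definition p22 :: "real \<Rightarrow> real \<Rightarrow> real \<Rightarrow> real \<Rightarrow> real \<Rightarrow> real \<Rightarrow> real" where
  "p22 rho m1 m2 E11 E12 E22 = 2 * E22 - rho * (vel rho m2)^2"

definition admissible :: "real \<Rightarrow> real \<Rightarrow> real \<Rightarrow> real \<Rightarrow> real \<Rightarrow> real \<Rightarrow> bool" where
  "admissible rho m1 m2 E11 E12 E22 \<longleftrightarrow> rho > 0 \<and>
     (\<forall>x1 x2::real. (x1, x2) \<noteq> (0, 0) \<longrightarrow>
        x1 * (p11 rho m1 m2 E11 E12 E22 * x1 + p12 rho m1 m2 E11 E12 E22 * x2)
      + x2 * (p12 rho m1 m2 E11 E12 E22 * x1 + p22 rho m1 m2 E11 E12 E22 * x2) > 0)"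

text \<open>Classical solution of du/dt = s(u) at a fixed spatial point, where Wx t, Wy t are
  the values of dW/dx, dW/dy at that point at time t.\<close>
definition source_solution ::
  "(real \<Rightarrow> real) \<Rightarrow> (real \<Rightarrow> real) \<Rightarrow> (real \<Rightarrow> real) \<Rightarrow> (real \<Rightarrow> real) \<Rightarrow>
   (real \<Rightarrow> real) \<Rightarrow> (real \<Rightarrow> real) \<Rightarrow> (real \<Rightarrow> real) \<Rightarrow> (real \<Rightarrow> real) \<Rightarrow> bool" where
  "source_solution Wx Wy rho m1 m2 E11 E12 E22 \<longleftrightarrow> (\<forall>t.
     (rho has_real_derivative 0) (at t) \<and>
     (m1 has_real_derivative (- (1/2) * rho t * Wx t)) (at t) \<and>
     (m2 has_real_derivative (- (1/2) * rho t * Wy t)) (at t) \<and>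
     (E11 has_real_derivative (- (1/2) * rho t * vel (rho t) (m1 t) * Wx t)) (at t) \<and>
     (E12 has_real_derivative (- (1/4) * rho t * vel (rho t) (m2 t) * Wx t
                               - (1/4) * rho t * vel (rho t) (m1 t) * Wy t)) (at t) \<and>
     (E22 has_real_derivative (- (1/2) * rho t * vel (rho t) (m2 t) * Wy t)) (at t))"

end

theory Submission
  imports Defs
begin

text \<open>The source term never changes the density, so \<open>\<rho>\<close> is a constant \<open>c\<close>. With \<open>\<rho>\<close> fixed,
  each pressure component has the form \<open>2 E\<^sub>i\<^sub>j - m\<^sub>i m\<^sub>j / c\<close>, and the source
  is exactly such that its time derivative vanishes. Hence the pressure tensor is constant in
  time, and admissibility, which depends only on \<open>\<rho>\<close> and \<open>p\<close>, holds at every time once it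
  holds at one.\<close>

lemma source_solution_density_const:
  assumes "source_solution Wx Wy rho m1 m2 E11 E12 E22"
  shows "rho s = rho t"
  using assms DERIV_isconst_all unfolding source_solution_def by metis

lemma energy_minus_product_const:
  fixes f g E :: "real \<Rightarrow> real"
  assumes "\<And>x. (f has_real_derivative f' x) (at x)"
    and "\<And>x. (g has_real_derivative g' x) (at x)"
    and "\<And>x. (E has_real_derivative (f x * g' x + f' x * g x) / (2 * c)) (at x)"
  shows "2 * E s - f s * g s / c = 2 * E t - f t * g t / c"
proof -
  have "((\<lambda>x. 2 * E x - f x * g x / c) has_real_derivative 0) (at x)" for x
  proof -
    have "((\<lambda>x. 2 * E x - f x * g x / c) has_real_derivative
            2 * ((f x * g' x + f' x * g x) / (2 * c)) - (f x * g' x + f' x * g x) / c) (at x)"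
      using assms by (intro DERIV_diff DERIV_cmult DERIV_cdivide DERIV_mult')
    then show ?thesis
      by (cases "c = 0") (simp_all add: field_simps)
  qed
  then show ?thesis
    using DERIV_isconst_all[of "\<lambda>x. 2 * E x - f x * g x / c" s t] by blast
qed

lemma source_solution_pressure_const:
  assumes sol: "source_solution Wx Wy rho m1 m2 E11 E12 E22" and "rho t \<noteq> 0"
  shows "p11 (rho s) (m1 s) (m2 s) (E11 s) (E12 s) (E22 s)
           = p11 (rho t) (m1 t) (m2 t) (E11 t) (E12 t) (E22 t)"
    and "p12 (rho s) (m1 s) (m2 s) (E11 s) (E12 s) (E22 s)
           = p12 (rho t) (m1 t) (m2 t) (E11 t) (E12 t) (E22 t)"
    and "p22 (rho s) (m1 s) (m2 s) (E11 s) (E12 s) (E22 s)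
           = p22 (rho t) (m1 t) (m2 t) (E11 t) (E12 t) (E22 t)"
proof -
  define c where "c = rho t"
  have rho_c: "rho x = c" for x
    unfolding c_def using sol by (rule source_solution_density_const)
  have "c \<noteq> 0" using \<open>rho t \<noteq> 0\<close> by (simp add: c_def)
  have deriv: "(m1 has_real_derivative - (1/2) * c * Wx x) (at x)"
    "(m2 has_real_derivative - (1/2) * c * Wy x) (at x)"
    "(E11 has_real_derivative - (1/2) * m1 x * Wx x) (at x)"
    "(E12 has_real_derivative - (1/4) * m2 x * Wx x - (1/4) * m1 x * Wy x) (at x)"
    "(E22 has_real_derivative - (1/2) * m2 x * Wy x) (at x)" for x
    using sol \<open>c \<noteq> 0\<close> unfolding source_solution_def vel_def rho_c by auto
  have "2 * E11 s - m1 s * m1 s / c = 2 * E11 t - m1 t * m1 t / c"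
    using \<open>c \<noteq> 0\<close>
    by (intro energy_minus_product_const[OF deriv(1) deriv(1)] DERIV_cong[OF deriv(3)])
      (simp add: field_simps)
  moreover have "2 * E12 s - m1 s * m2 s / c = 2 * E12 t - m1 t * m2 t / c"
    using \<open>c \<noteq> 0\<close>
    by (intro energy_minus_product_const[OF deriv(1) deriv(2)] DERIV_cong[OF deriv(4)])
      (simp add: field_simps)
  moreover have "2 * E22 s - m2 s * m2 s / c = 2 * E22 t - m2 t * m2 t / c"
    using \<open>c \<noteq> 0\<close>
    by (intro energy_minus_product_const[OF deriv(2) deriv(2)] DERIV_cong[OF deriv(5)])
      (simp add: field_simps)
  ultimately show "p11 (rho s) (m1 s) (m2 s) (E11 s) (E12 s) (E22 s)
               = p11 (rho t) (m1 t) (m2 t) (E11 t) (E12 t) (E22 t)"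
    and "p12 (rho s) (m1 s) (m2 s) (E11 s) (E12 s) (E22 s)
           = p12 (rho t) (m1 t) (m2 t) (E11 t) (E12 t) (E22 t)"
    and "p22 (rho s) (m1 s) (m2 s) (E11 s) (E12 s) (E22 s)
           = p22 (rho t) (m1 t) (m2 t) (E11 t) (E12 t) (E22 t)"
    using \<open>c \<noteq> 0\<close> by (simp_all add: rho_c p11_def p12_def p22_def vel_def power2_eq_square)
qed

lemma admissible_cong_pressure:
  assumes "rho = rho'"
    and "p11 rho m1 m2 E11 E12 E22 = p11 rho' m1' m2' E11' E12' E22'"
    and "p12 rho m1 m2 E11 E12 E22 = p12 rho' m1' m2' E11' E12' E22'"
    and "p22 rho m1 m2 E11 E12 E22 = p22 rho' m1' m2' E11' E12' E22'"
  shows "admissible rho m1 m2 E11 E12 E22 \<longleftrightarrow> admissible rho' m1' m2' E11' E12' E22'"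
  using assms unfolding admissible_def by simp

theorem lemma2:
  fixes Wx Wy rho m1 m2 E11 E12 E22 :: "real \<Rightarrow> real" and t :: real
  assumes "source_solution Wx Wy rho m1 m2 E11 E12 E22"
    and "admissible (rho t) (m1 t) (m2 t) (E11 t) (E12 t) (E22 t)"
  shows "\<forall>\<tau>::real. admissible (rho (t + \<tau>)) (m1 (t + \<tau>)) (m2 (t + \<tau>))
                       (E11 (t + \<tau>)) (E12 (t + \<tau>)) (E22 (t + \<tau>))"
proof
  fix \<tau> :: real
  have "rho t \<noteq> 0"
    using assms(2) unfolding admissible_def by simp
  then show "admissible (rho (t + \<tau>)) (m1 (t + \<tau>)) (m2 (t + \<tau>))
               (E11 (t + \<tau>)) (E12 (t + \<tau>)) (E22 (t + \<tau>))"
    using assms admissible_cong_pressure[OF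
        source_solution_density_const[OF assms(1)]
        source_solution_pressure_const[OF assms(1), where s = "t + \<tau>" and t = t]]
    by simp
qed

end
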